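(* Let a witness (W, P, \Phi) be given, where W: \mathcal{N} \to \mathcal{E} assigns an invariant to every program location. The program is instrumented by inserting, at every location n with W n different from the trivial invariant true, a statement \mathrm{unassume}(W\,n). This statement is a no-op in the concrete semantics. In the abstract semantics it is interpreted by a sound abstract unassume operator, i.e. an operator satisfying \gamma\,d \subseteq \gamma(\llbracket \mathrm{unassume}_V(e) \rrbracket^\sharp d) for all d \in \mathbb{D}. Let \sigma_W: \mathcal{N} \to \mathbb{D} be the result of analyzing the instrumented program with an abstract interpreter that is sound for the original program. Suppose this analysis confirms the property \Phi, and suppose every invariant W\,n abstractly evaluates to true in \sigma_W. Then the witness is valid: every invariant W\,n holds at location n in every concrete execution of the original program, and the program satisfies \Phi.
   Context: Programs are abstractly interpreted over an abstract domain \mathbb{D} with concretization \gamma. The set of program locations is \mathcal{N}, and \mathcal{E} is the language of invariant expressions. A witness (W, P, \Phi) consists of W: \mathcal{N} \to \mathcal{E}, mapping locations to claimed invariants, together with the program P and the property \Phi that is claimed to hold. *)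

theory Defs
  imports Main
begin

record ('n, 'a, 's) prog =
  entry :: 'n
  init  :: "'s set"
  edges :: "('n \<times> 'a \<times> 'n) set"

inductive_set reach :: "('n, 'a, 's) prog \<Rightarrow> ('a \<Rightarrow> 's \<Rightarrow> 's set) \<Rightarrow> ('n \<times> 's) set"
  for P :: "('n, 'a, 's) prog" and sem :: "'a \<Rightarrow> 's \<Rightarrow> 's set" where
  reach_init: "s \<in> init P \<Longrightarrow> (entry P, s) \<in> reach P sem"
| reach_step: "(u, s) \<in> reach P sem \<Longrightarrow> (u, a, v) \<in> edges P \<Longrightarrow> s' \<in> sem a s
                 \<Longrightarrow> (v, s') \<in> reach P sem"

definition states_at :: "('n, 'a, 's) prog \<Rightarrow> ('a \<Rightarrow> 's \<Rightarrow> 's set) \<Rightarrow> 'n \<Rightarrow> 's set" where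
  "states_at P sem n = {s. (n, s) \<in> reach P sem}"

definition sound_transfer ::
  "('d \<Rightarrow> 's set) \<Rightarrow> ('a \<Rightarrow> 's \<Rightarrow> 's set) \<Rightarrow> ('a \<Rightarrow> 'd \<Rightarrow> 'd) \<Rightarrow> bool" where
  "sound_transfer \<gamma> sem asem \<longleftrightarrow> (\<forall>a d s. s \<in> \<gamma> d \<longrightarrow> sem a s \<subseteq> \<gamma> (asem a d))"

definition sound_unassume :: "('d \<Rightarrow> 's set) \<Rightarrow> ('e \<Rightarrow> 'd \<Rightarrow> 'd) \<Rightarrow> bool" where
  "sound_unassume \<gamma> unas \<longleftrightarrow> (\<forall>e d. \<gamma> d \<subseteq> \<gamma> (unas e d))"

text \<open>Result of an abstract interpretation of a program: a (post-)solution of the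
  abstract constraint system, i.e. initial states are covered at the entry and
  every edge's abstract transfer is covered by the target's abstract value.\<close>

definition abs_solution ::
  "('n, 'a, 's) prog \<Rightarrow> ('d \<Rightarrow> 's set) \<Rightarrow> ('a \<Rightarrow> 'd \<Rightarrow> 'd) \<Rightarrow> ('n \<Rightarrow> 'd) \<Rightarrow> bool" where
  "abs_solution P \<gamma> asem \<sigma> \<longleftrightarrow>
     init P \<subseteq> \<gamma> (\<sigma> (entry P)) \<and>
     (\<forall>u a v. (u, a, v) \<in> edges P \<longrightarrow> \<gamma> (asem a (\<sigma> u)) \<subseteq> \<gamma> (\<sigma> v))"

text \<open>Actions of the instrumented program are original actions or
  unassume statements; locations are original locations (Loc n) plus, for every n
  with a non-trivial invariant, an auxiliary location (Mid n) reached right after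
  executing unassume(W n) at n.\<close>

datatype ('a, 'e) iact = Orig 'a | Unassume 'e
datatype 'n iloc = Loc 'n | Mid 'n

definition instrument ::
  "'e \<Rightarrow> ('n \<Rightarrow> 'e) \<Rightarrow> ('n, 'a, 's) prog \<Rightarrow> ('n iloc, ('a, 'e) iact, 's) prog" where
  "instrument tt W P = \<lparr> entry = Loc (entry P), init = init P,
     edges = {(Loc u, Orig a, Loc v) | u a v. (u, a, v) \<in> edges P \<and> W u = tt}
           \<union> {(Loc u, Unassume (W u), Mid u) | u. W u \<noteq> tt}
           \<union> {(Mid u, Orig a, Loc v) | u a v. (u, a, v) \<in> edges P \<and> W u \<noteq> tt} \<rparr>"

fun isem :: "('a \<Rightarrow> 's \<Rightarrow> 's set) \<Rightarrow> ('a, 'e) iact \<Rightarrow> 's \<Rightarrow> 's set" where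
  "isem sem (Orig a) s = sem a s"
| "isem sem (Unassume e) s = {s}"

fun iasem :: "('a \<Rightarrow> 'd \<Rightarrow> 'd) \<Rightarrow> ('e \<Rightarrow> 'd \<Rightarrow> 'd) \<Rightarrow> ('a, 'e) iact \<Rightarrow> 'd \<Rightarrow> 'd" where
  "iasem asem unas (Orig a) d = asem a d"
| "iasem asem unas (Unassume e) d = unas e d"

text \<open>Witness validity: every invariant holds at its location in every concrete
  execution, and the program satisfies the property Phi (a predicate on the
  collecting semantics, i.e. on the states reachable at each location).\<close>

definition valid_witness ::
  "('e \<Rightarrow> 's \<Rightarrow> bool) \<Rightarrow> ('n \<Rightarrow> 'e) \<Rightarrow> ('n, 'a, 's) prog \<Rightarrow> ('a \<Rightarrow> 's \<Rightarrow> 's set)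
   \<Rightarrow> (('n \<Rightarrow> 's set) \<Rightarrow> bool) \<Rightarrow> bool" where
  "valid_witness eval W P sem \<Phi> \<longleftrightarrow>
     (\<forall>n s. (n, s) \<in> reach P sem \<longrightarrow> eval (W n) s) \<and> \<Phi> (states_at P sem)"

end

theory Submission
  imports Defs
begin

text \<open>Since unassume is a no-op concretely, every concrete execution of the original
  program is mirrored by one of the instrumented program that visits the same
  states at the original locations. Abstract unassume only loses precision, so the
  abstract interpreter stays sound for the instrumented program; hence \<sigma> over-approximates
  the reachable states of the original program, and the checked invariants and the
  confirmed property transfer to the concrete executions.\<close>

lemma abs_solution_covers_reach:
  assumes "sound_transfer \<gamma> sem asem"
    and "abs_solution P \<gamma> asem \<sigma>"
    and "(n, s) \<in> reach P sem"
  shows "s \<in> \<gamma> (\<sigma> n)"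
  using assms(3)
proof (induction rule: reach.induct)
  case (reach_init s)
  then show ?case
    using assms(2) by (auto simp: abs_solution_def)
next
  case (reach_step u s a v s')
  then have "s' \<in> \<gamma> (asem a (\<sigma> u))"
    using assms(1) by (auto simp: sound_transfer_def)
  then show ?case
    using reach_step.hyps(2) assms(2) unfolding abs_solution_def by blast
qed

lemma sound_transfer_instrumented:
  assumes "sound_transfer \<gamma> sem asem"
    and "sound_unassume \<gamma> unas"
  shows "sound_transfer \<gamma> (isem sem) (iasem asem unas)"
  unfolding sound_transfer_def
proof (intro allI impI)
  fix b d s
  assume s: "s \<in> \<gamma> d"
  show "isem sem b s \<subseteq> \<gamma> (iasem asem unas b d)"
  proof (cases b)
    case (Orig a)
    then show ?thesis
      using assms(1) s by (simp add: sound_transfer_def)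
  next
    case (Unassume e)
    then show ?thesis
      using assms(2) s by (auto simp: sound_unassume_def)
  qed
qed

lemma reach_instrument:
  assumes "(n, s) \<in> reach P sem"
  shows "(Loc n, s) \<in> reach (instrument tt W P) (isem sem)"
  using assms
proof (induction rule: reach.induct)
  case (reach_init s)
  then show ?case
    using reach.reach_init[of s "instrument tt W P"] by (simp add: instrument_def)
next
  case (reach_step u s a v s')
  show ?case
  proof (cases "W u = tt")
    case True
    then have "(Loc u, Orig a, Loc v) \<in> edges (instrument tt W P)"
      using reach_step.hyps(2) by (auto simp: instrument_def)
    with reach_step show ?thesis
      using reach.reach_step by fastforce
  next
    case False
    then have "(Loc u, Unassume (W u), Mid u) \<in> edges (instrument tt W P)"
      and mid_edge: "(Mid u, Orig a, Loc v) \<in> edges (instrument tt W P)"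
      using reach_step.hyps(2) by (auto simp: instrument_def)
    then have "(Mid u, s) \<in> reach (instrument tt W P) (isem sem)"
      using reach_step.IH reach.reach_step by fastforce
    with mid_edge show ?thesis
      using reach_step.hyps(3) reach.reach_step by fastforce
  qed
qed

lemma states_at_subset_instrumented_solution:
  assumes "sound_transfer \<gamma> sem asem"
    and "sound_unassume \<gamma> unas"
    and "abs_solution (instrument tt W P) \<gamma> (iasem asem unas) \<sigma>"
  shows "states_at P sem n \<subseteq> \<gamma> (\<sigma> (Loc n))"
proof
  fix s
  assume "s \<in> states_at P sem n"
  then have "(Loc n, s) \<in> reach (instrument tt W P) (isem sem)"
    unfolding states_at_def by (simp add: reach_instrument)
  then show "s \<in> \<gamma> (\<sigma> (Loc n))"
    by (rule abs_solution_covers_reach[OF sound_transfer_instrumented[OF assms(1,2)] assms(3)])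
qed

theorem mainTheorem1:
  fixes P :: "('n, 'a, 's) prog"
    and sem :: "'a \<Rightarrow> 's \<Rightarrow> 's set"
    and \<gamma> :: "'d \<Rightarrow> 's set"
    and asem :: "'a \<Rightarrow> 'd \<Rightarrow> 'd"
    and unas :: "'e \<Rightarrow> 'd \<Rightarrow> 'd"
    and eval :: "'e \<Rightarrow> 's \<Rightarrow> bool"
    and aeval :: "'e \<Rightarrow> 'd \<Rightarrow> bool"
    and tt :: 'e
    and W :: "'n \<Rightarrow> 'e"
    and \<Phi> :: "('n \<Rightarrow> 's set) \<Rightarrow> bool"
    and confirms :: "('n \<Rightarrow> 'd) \<Rightarrow> bool"
    and \<sigma> :: "'n iloc \<Rightarrow> 'd"
  assumes tt_true: "\<And>s. eval tt s"
    and aeval_sound: "\<And>e d s. aeval e d \<Longrightarrow> s \<in> \<gamma> d \<Longrightarrow> eval e s"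
    and confirms_sound: "\<And>\<tau> R. confirms \<tau> \<Longrightarrow> (\<And>n. R n \<subseteq> \<gamma> (\<tau> n)) \<Longrightarrow> \<Phi> R"
    and transfer_sound: "sound_transfer \<gamma> sem asem"
    and unassume_sound: "sound_unassume \<gamma> unas"
    and analysis: "abs_solution (instrument tt W P) \<gamma> (iasem asem unas) \<sigma>"
    and confirmed: "confirms (\<lambda>n. \<sigma> (Loc n))"
    and invariants_checked: "\<And>n. aeval (W n) (\<sigma> (Loc n))"
  shows "valid_witness eval W P sem \<Phi>"
proof -
  have covered: "states_at P sem n \<subseteq> \<gamma> (\<sigma> (Loc n))" for n
    using states_at_subset_instrumented_solution[OF transfer_sound unassume_sound analysis] .
  have "eval (W n) s" if "(n, s) \<in> reach P sem" for n s
    using aeval_sound[OF invariants_checked] covered that by (auto simp: states_at_def)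
  moreover have "\<Phi> (states_at P sem)"
    using confirms_sound[OF confirmed covered] .
  ultimately show ?thesis
    unfolding valid_witness_def by blast
qed

end
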